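(* (a) $\mathbf{Ck}$-tableaux and $\mathbf{CK}$-tableaux are sound for Segerberg models: if a finite set of formulas $\{\theta_1,\dots,\theta_n\}$ is satisfiable in some Segerberg model, then no $\mathbf{Ck}$- or $\mathbf{CK}$-tableau with assumptions $1:\theta_1,\dots,1:\theta_n$ is closed. (b) $\mathbf{Vc}$-tableaux are sound for $\mathbf{VC}$-models: if $\{\theta_1,\dots,\theta_n\}$ is satisfiable in some $\mathbf{VC}$-model, then no $\mathbf{Vc}$-tableau with assumptions $1:\theta_1,\dots,1:\theta_n$ is closed.
   Context: Formulas: built from propositional variables and the constant $\bot$ using $\lnot$, the binary connectives $\supset,\land,\lor$, and two binary conditional operators $[\phi]\psi$ and $\langle\phi\rangle\psi$ (treated as primitive by tableau rules). $\top$ abbreviates $\lnot\bot$. Segerberg model: $M=\langle U,P,R,V\rangle$ with $U\neq\emptyset$, $P\subseteq\wp(U)$, $R:P\to\wp(U\times U)$, $V:\mathrm{Var}\to P$, such that $\emptyset,U\in P$; $P$ is closed under complement, binary intersection and union; and for $S,T\in P$, $\{x\in U\mid R_S(x)\subseteq T\}\in P$, where $R_S=R(S)$ and $R_S(x)=\{y\mid (x,y)\in R_S\}$. Truth: $M,x\not\models\bot$; $M,x\models p$ iff $x\in V(p)$; Boolean connectives as usual; $M,x\models[\phi]\psi$ iff $M,y\models\psi$ for all $y\in R_\phi(x)$; $M,x\models\langle\phi\rangle\psi$ iff $M,y\models\psi$ for some $y\in R_\phi(x)$; here $\|\phi\|=\{x\mid M,x\models\phi\}$ and $R_\phi=R_{\|\phi\|}$.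 A set of formulas is satisfiable in $M$ if all its members are true at a common world. A $\mathbf{VC}$-model is a Segerberg model such that for all $S,T\in P$ and $x\in U$: (1) $R_S(x)\subseteq S$; (2) $R_S(x)\cap T\neq\emptyset\Rightarrow R_T(x)\neq\emptyset$; (3) $R_U(x)\subseteq\{x\}$; (4) $x\in R_U(x)$; (5) $R_S(x)\cap T\subseteq R_{S\cap T}(x)$; (6) $R_S(x)\cap T\neq\emptyset\Rightarrow R_{S\cap T}(x)\subseteq R_S(x)\cap T$. Tableaux: indices are positive integers. Prefixed formulas are $i:\phi$ and $i\,r_\phi\,j$. A tableau with assumptions $A$ (a set of prefixed formulas) is a finite downward-branching tree labelled by prefixed formulas, each either in $A$ or obtained by applying a branch extension rule to prefixed formulas on its branch; non-branching rules append their conclusions, branching rules split the branch into one child per alternative, each alternative appending its listed conclusions. A branch is closed if it contains $i:\chi$ and $i:\lnot\chi$, or $i:\bot$; a tableau is closed if all branches are closed. Basic rules: from $i:\phi\land\psi$ add $i:\phi,i:\psi$; from $i:\lnot(\phi\land\psi)$ branch $i:\lnot\phi\mid i:\lnot\psi$; from $i:\phi\lor\psi$ branch $i:\phi\mid i:\psi$; from $i:\lnot(\phi\lor\psi)$ add $i:\lnot\phi,i:\lnot\psi$; from $i:\phi\supset\psi$ branch $i:\lnot\phi\mid i:\psi$; from $i:\lnot(\phi\supset\psi)$ add $i:\phi,i:\lnot\psi$; from $i:\lnot\lnot\phi$ add $i:\phi$; ($\Box$) from $i:[\phi]\psi$ and $i\,r_\phi\,j$ add $j:\psi$; ($\lnot\Box$)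 from $i:\lnot[\phi]\psi$ add $i\,r_\phi\,j$ and $j:\lnot\psi$, $j$ new; ($\Diamond$) from $i:\langle\phi\rangle\psi$ add $i\,r_\phi\,j$ and $j:\psi$, $j$ new; ($\lnot\Diamond$) from $i:\lnot\langle\phi\rangle\psi$ and $i\,r_\phi\,j$ add $j:\lnot\psi$. (cut) for any index $i$ already on the branch and any $\phi$, branch $i:\phi\mid i:\lnot\phi$. (ea) from $i\,r_\phi\,j$ and any $\psi$, branch ($k:\lnot\phi$, $k:\psi$) $\mid$ ($k:\phi$, $k:\lnot\psi$) $\mid$ $i\,r_\psi\,j$, $k$ new. (R1) from $i\,r_\phi\,j$ add $j:\phi$. (R2) from $j:\psi$ and $i\,r_\phi\,j$ add $i\,r_\psi\,k$, $k$ new. (R3) from $i:\phi$, $j:\lnot\phi$, $i\,r_\top\,j$ add $j:\phi$. (R4) for any index $i$ on the branch add $i\,r_\top\,i$. (R5) from $j:\psi$ and $i\,r_\phi\,j$ add $i\,r_{\phi\land\psi}\,j$. (R6) from $j:\psi$, $i\,r_\phi\,j$, $i\,r_{\phi\land\psi}\,k$ add $k:\psi$ and $i\,r_\phi\,k$. Systems: $\mathbf{Ck}$ = basic rules; $\mathbf{CK}$ = basic rules + cut + ea; $\mathbf{Vc}$ = basic rules + R1–R6. *)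

theory Defs
  imports Main
begin

datatype 'a form =
    Var 'a
  | Bot
  | Neg "'a form"
  | Imp "'a form" "'a form"
  | Conj "'a form" "'a form"
  | Disj "'a form" "'a form"
  | Box "'a form" "'a form"   (* [phi]psi *)
  | Dia "'a form" "'a form"   (* <phi>psi *)

definition Top :: "'a form" where "Top = Neg Bot"

record ('w, 'a) smodel =
  W  :: "'w set"
  Pr :: "'w set set"
  Rl :: "'w set \<Rightarrow> ('w \<times> 'w) set"
  Vl :: "'a \<Rightarrow> 'w set"

definition Rimg :: "('w, 'a) smodel \<Rightarrow> 'w set \<Rightarrow> 'w \<Rightarrow> 'w set" where
  "Rimg M S x = {y. (x, y) \<in> Rl M S}"

definition segerberg_model :: "('w, 'a) smodel \<Rightarrow> bool" where
  "segerberg_model M \<longleftrightarrow>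
     W M \<noteq> {} \<and>
     Pr M \<subseteq> Pow (W M) \<and>
     (\<forall>S\<in>Pr M. Rl M S \<subseteq> W M \<times> W M) \<and>
     (\<forall>p. Vl M p \<in> Pr M) \<and>
     {} \<in> Pr M \<and> W M \<in> Pr M \<and>
     (\<forall>S\<in>Pr M. W M - S \<in> Pr M) \<and>
     (\<forall>S\<in>Pr M. \<forall>T\<in>Pr M. S \<inter> T \<in> Pr M) \<and>
     (\<forall>S\<in>Pr M. \<forall>T\<in>Pr M. S \<union> T \<in> Pr M) \<and>
     (\<forall>S\<in>Pr M. \<forall>T\<in>Pr M. {x \<in> W M. Rimg M S x \<subseteq> T} \<in> Pr M)"

definition VC_model :: "('w, 'a) smodel \<Rightarrow> bool" where
  "VC_model M \<longleftrightarrow> segerberg_model M \<and>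
     (\<forall>S\<in>Pr M. \<forall>T\<in>Pr M. \<forall>x\<in>W M.
        Rimg M S x \<subseteq> S \<and>
        (Rimg M S x \<inter> T \<noteq> {} \<longrightarrow> Rimg M T x \<noteq> {}) \<and>
        Rimg M (W M) x \<subseteq> {x} \<and>
        x \<in> Rimg M (W M) x \<and>
        Rimg M S x \<inter> T \<subseteq> Rimg M (S \<inter> T) x \<and>
        (Rimg M S x \<inter> T \<noteq> {} \<longrightarrow> Rimg M (S \<inter> T) x \<subseteq> Rimg M S x \<inter> T))"

primrec sat :: "('w, 'a) smodel \<Rightarrow> 'w \<Rightarrow> 'a form \<Rightarrow> bool" where
  "sat M x (Var p) = (x \<in> Vl M p)"
| "sat M x Bot = False"
| "sat M x (Neg f) = (\<not> sat M x f)"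
| "sat M x (Imp f g) = (sat M x f \<longrightarrow> sat M x g)"
| "sat M x (Conj f g) = (sat M x f \<and> sat M x g)"
| "sat M x (Disj f g) = (sat M x f \<or> sat M x g)"
| "sat M x (Box f g) = (\<forall>y. (x, y) \<in> Rl M {z \<in> W M. sat M z f} \<longrightarrow> sat M y g)"
| "sat M x (Dia f g) = (\<exists>y. (x, y) \<in> Rl M {z \<in> W M. sat M z f} \<and> sat M y g)"

definition satisfiable_in :: "('w, 'a) smodel \<Rightarrow> 'a form set \<Rightarrow> bool" where
  "satisfiable_in M \<Gamma> \<longleftrightarrow> (\<exists>x\<in>W M. \<forall>f\<in>\<Gamma>. sat M x f)"

text \<open>Prefixed formulas: Lab i phi is i:phi, Rel i phi j is i r_phi j. Indices are
positive naturals.\<close>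
datatype 'a pform = Lab nat "'a form" | Rel nat "'a form" nat

fun pidx :: "'a pform \<Rightarrow> nat set" where
  "pidx (Lab i f) = {i}"
| "pidx (Rel i f j) = {i, j}"

definition idx :: "'a pform list \<Rightarrow> nat set" where
  "idx b = (\<Union>p\<in>set b. pidx p)"

definition new :: "nat \<Rightarrow> 'a pform list \<Rightarrow> bool" where
  "new j b \<longleftrightarrow> 0 < j \<and> j \<notin> idx b"

datatype system = Ck | CK | Vc

text \<open>rule_app s b alts: some branch extension rule of system s is applicable to
prefixed formulas on branch b, yielding the list of alternatives alts (one alternative
for non-branching rules); each alternative is the list of its conclusions.\<close>
inductive rule_app :: "system \<Rightarrow> 'a pform list \<Rightarrow> 'a pform list list \<Rightarrow> bool" where
  conj: "Lab i (Conj f g) \<in> set b \<Longrightarrow> rule_app s b [[Lab i f, Lab i g]]"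
| nconj: "Lab i (Neg (Conj f g)) \<in> set b \<Longrightarrow> rule_app s b [[Lab i (Neg f)], [Lab i (Neg g)]]"
| disj: "Lab i (Disj f g) \<in> set b \<Longrightarrow> rule_app s b [[Lab i f], [Lab i g]]"
| ndisj: "Lab i (Neg (Disj f g)) \<in> set b \<Longrightarrow> rule_app s b [[Lab i (Neg f), Lab i (Neg g)]]"
| imp: "Lab i (Imp f g) \<in> set b \<Longrightarrow> rule_app s b [[Lab i (Neg f)], [Lab i g]]"
| nimp: "Lab i (Neg (Imp f g)) \<in> set b \<Longrightarrow> rule_app s b [[Lab i f, Lab i (Neg g)]]"
| nneg: "Lab i (Neg (Neg f)) \<in> set b \<Longrightarrow> rule_app s b [[Lab i f]]"
| box: "Lab i (Box f g) \<in> set b \<Longrightarrow> Rel i f j \<in> set b \<Longrightarrow> rule_app s b [[Lab j g]]"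
| nbox: "Lab i (Neg (Box f g)) \<in> set b \<Longrightarrow> new j b \<Longrightarrow>
          rule_app s b [[Rel i f j, Lab j (Neg g)]]"
| dia: "Lab i (Dia f g) \<in> set b \<Longrightarrow> new j b \<Longrightarrow>
          rule_app s b [[Rel i f j, Lab j g]]"
| ndia: "Lab i (Neg (Dia f g)) \<in> set b \<Longrightarrow> Rel i f j \<in> set b \<Longrightarrow>
          rule_app s b [[Lab j (Neg g)]]"
| cut: "i \<in> idx b \<Longrightarrow> rule_app CK b [[Lab i f], [Lab i (Neg f)]]"
| ea: "Rel i f j \<in> set b \<Longrightarrow> new k b \<Longrightarrow>
          rule_app CK b [[Lab k (Neg f), Lab k g], [Lab k f, Lab k (Neg g)], [Rel i g j]]"
| R1: "Rel i f j \<in> set b \<Longrightarrow> rule_app Vc b [[Lab j f]]"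
| R2: "Lab j g \<in> set b \<Longrightarrow> Rel i f j \<in> set b \<Longrightarrow> new k b \<Longrightarrow>
          rule_app Vc b [[Rel i g k]]"
| R3: "Lab i f \<in> set b \<Longrightarrow> Lab j (Neg f) \<in> set b \<Longrightarrow> Rel i Top j \<in> set b \<Longrightarrow>
          rule_app Vc b [[Lab j f]]"
| R4: "i \<in> idx b \<Longrightarrow> rule_app Vc b [[Rel i Top i]]"
| R5: "Lab j g \<in> set b \<Longrightarrow> Rel i f j \<in> set b \<Longrightarrow>
          rule_app Vc b [[Rel i (Conj f g) j]]"
| R6: "Lab j g \<in> set b \<Longrightarrow> Rel i f j \<in> set b \<Longrightarrow> Rel i (Conj f g) k \<in> set b \<Longrightarrow>
          rule_app Vc b [[Lab k g, Rel i f k]]"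

text \<open>A tableau is represented by the list of its branches (each branch listed from the
root downwards).\<close>
inductive tableau :: "system \<Rightarrow> 'a pform set \<Rightarrow> 'a pform list list \<Rightarrow> bool"
  for s :: system and A :: "'a pform set" where
  empty: "tableau s A [[]]"
| assm: "tableau s A (bs1 @ b # bs2) \<Longrightarrow> p \<in> A \<Longrightarrow>
           tableau s A (bs1 @ (b @ [p]) # bs2)"
| rule: "tableau s A (bs1 @ b # bs2) \<Longrightarrow> rule_app s b alts \<Longrightarrow>
           tableau s A (bs1 @ map (\<lambda>c. b @ c) alts @ bs2)"

definition closed_branch :: "'a pform list \<Rightarrow> bool" where
  "closed_branch b \<longleftrightarrow>
     (\<exists>i f. Lab i f \<in> set b \<and> Lab i (Neg f) \<in> set b) \<or> (\<exists>i. Lab i Bot \<in> set b)"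

definition closed_tableau :: "'a pform list list \<Rightarrow> bool" where
  "closed_tableau T \<longleftrightarrow> (\<forall>b\<in>set T. closed_branch b)"

end

theory Submission
  imports Defs
begin

text \<open>Some branch of every tableau stays realized in the model: there is a map from indices
to worlds making each prefixed formula on it true, with index 1 sent to the world satisfying
the assumptions. Truth sets of formulas are propositions of the model, so the frame conditions
of \<open>VC\<close>-models apply to the relations \<open>R\<^sub>\<phi>\<close>; they are exactly what makes the rules R1--R6
preserve realizability. The other rules preserve it by the truth conditions, choosing a witness
world for a new index when one is introduced; for the extensionality rule ea, either the two
formulas have the same truth set, or a world separating them is the witness. A realized branch
cannot be closed.\<close>

abbreviation truth_set :: "('w, 'a) smodel \<Rightarrow> 'a form \<Rightarrow> 'w set" where
  "truth_set M f \<equiv> {z \<in> W M. sat M z f}"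

lemma truth_set_in_Pr:
  assumes M: "segerberg_model M"
  shows "truth_set M f \<in> Pr M"
proof (induction f)
  case (Var p)
  moreover have "truth_set M (Var p) = Vl M p"
    using M by (auto simp: segerberg_model_def)
  ultimately show ?case
    using M by (simp add: segerberg_model_def)
next
  case (Neg f)
  have "truth_set M (Neg f) = W M - truth_set M f" by auto
  with Neg M show ?case by (simp add: segerberg_model_def)
next
  case (Imp f g)
  have "truth_set M (Imp f g) = (W M - truth_set M f) \<union> truth_set M g" by auto
  with Imp M show ?case by (simp add: segerberg_model_def)
next
  case (Conj f g)
  have "truth_set M (Conj f g) = truth_set M f \<inter> truth_set M g" by auto
  with Conj M show ?case by (simp add: segerberg_model_def)
next
  case (Disj f g)
  have "truth_set M (Disj f g) = truth_set M f \<union> truth_set M g" by auto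
  with Disj M show ?case by (simp add: segerberg_model_def)
next
  case (Box f g)
  have "Rl M (truth_set M f) \<subseteq> W M \<times> W M"
    using Box M by (simp add: segerberg_model_def)
  then have "truth_set M (Box f g) = {x \<in> W M. Rimg M (truth_set M f) x \<subseteq> truth_set M g}"
    by (auto simp: Rimg_def)
  with Box M show ?case by (simp add: segerberg_model_def)
next
  case (Dia f g)
  have "Rl M (truth_set M f) \<subseteq> W M \<times> W M"
    using Dia M by (simp add: segerberg_model_def)
  then have "truth_set M (Dia f g) =
      W M - {x \<in> W M. Rimg M (truth_set M f) x \<subseteq> W M - truth_set M g}"
    by (auto simp: Rimg_def)
  with Dia M show ?case by (simp add: segerberg_model_def)
qed (use M in \<open>simp add: segerberg_model_def\<close>)

lemma Rl_truth_set_subset: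
  assumes "segerberg_model M"
  shows "Rl M (truth_set M f) \<subseteq> W M \<times> W M"
  using truth_set_in_Pr[OF assms, of f] assms unfolding segerberg_model_def by blast

lemma truth_set_Top: "truth_set M Top = W M"
  by (auto simp: Top_def)

lemma truth_set_Conj: "truth_set M (Conj f g) = truth_set M f \<inter> truth_set M g"
  by auto

lemma VC_model_segerberg: "VC_model M \<Longrightarrow> segerberg_model M"
  by (simp add: VC_model_def)

lemma VC_model_frameD:
  assumes "VC_model M" "S \<in> Pr M" "T \<in> Pr M" "x \<in> W M"
  shows "Rimg M S x \<subseteq> S"
    and "Rimg M S x \<inter> T \<noteq> {} \<Longrightarrow> Rimg M T x \<noteq> {}"
    and "Rimg M (W M) x \<subseteq> {x}"
    and "x \<in> Rimg M (W M) x"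
    and "Rimg M S x \<inter> T \<subseteq> Rimg M (S \<inter> T) x"
    and "Rimg M S x \<inter> T \<noteq> {} \<Longrightarrow> Rimg M (S \<inter> T) x \<subseteq> Rimg M S x \<inter> T"
  using assms(1)[unfolded VC_model_def, THEN conjunct2, rule_format, OF assms(2-4)] by blast+

lemma VC_Rl_source:
  "VC_model M \<Longrightarrow> (x, y) \<in> Rl M (truth_set M f) \<Longrightarrow> x \<in> W M"
  using Rl_truth_set_subset[OF VC_model_segerberg] by blast

lemma VC_Rl_sat:
  assumes M: "VC_model M" and xy: "(x, y) \<in> Rl M (truth_set M f)"
  shows "sat M y f"
  using VC_model_frameD(1)[OF M _ _ VC_Rl_source[OF M xy]] xy
    truth_set_in_Pr[OF VC_model_segerberg[OF M]]
  by (auto simp: Rimg_def)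

lemma VC_Rl_exists:
  assumes M: "VC_model M" and xy: "(x, y) \<in> Rl M (truth_set M f)" and "sat M y g"
  shows "\<exists>z. (x, z) \<in> Rl M (truth_set M g)"
proof -
  have "y \<in> W M" using Rl_truth_set_subset[OF VC_model_segerberg[OF M]] xy by blast
  then have "Rimg M (truth_set M f) x \<inter> truth_set M g \<noteq> {}"
    using xy \<open>sat M y g\<close> by (auto simp: Rimg_def)
  then show ?thesis
    using VC_model_frameD(2)[OF M _ _ VC_Rl_source[OF M xy]]
      truth_set_in_Pr[OF VC_model_segerberg[OF M]]
    by (auto simp: Rimg_def)
qed

lemma VC_Rl_Top_eq:
  assumes M: "VC_model M" and xy: "(x, y) \<in> Rl M (truth_set M Top)"
  shows "y = x"
  using VC_model_frameD(3)[OF M _ _ VC_Rl_source[OF M xy]] xy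
    truth_set_in_Pr[OF VC_model_segerberg[OF M]]
  by (auto simp: Rimg_def truth_set_Top)

lemma VC_Rl_Top_refl:
  assumes M: "VC_model M" and "x \<in> W M"
  shows "(x, x) \<in> Rl M (truth_set M Top)"
  using VC_model_frameD(4)[OF M _ _ \<open>x \<in> W M\<close>] truth_set_in_Pr[OF VC_model_segerberg[OF M]]
  by (auto simp: Rimg_def truth_set_Top)

lemma VC_Rl_Conj:
  assumes M: "VC_model M" and xy: "(x, y) \<in> Rl M (truth_set M f)" and "sat M y g"
  shows "(x, y) \<in> Rl M (truth_set M (Conj f g))"
proof -
  have "y \<in> W M" using Rl_truth_set_subset[OF VC_model_segerberg[OF M]] xy by blast
  then have "y \<in> Rimg M (truth_set M f) x \<inter> truth_set M g"
    using xy \<open>sat M y g\<close> by (auto simp: Rimg_def)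
  then have "y \<in> Rimg M (truth_set M f \<inter> truth_set M g) x"
    using VC_model_frameD(5)[OF M truth_set_in_Pr truth_set_in_Pr VC_Rl_source[OF M xy]]
      VC_model_segerberg[OF M] by blast
  then show ?thesis unfolding truth_set_Conj by (simp only: Rimg_def mem_Collect_eq)
qed

lemma VC_Rl_Conj_imp:
  assumes M: "VC_model M" and xy: "(x, y) \<in> Rl M (truth_set M f)" and "sat M y g"
    and xz: "(x, z) \<in> Rl M (truth_set M (Conj f g))"
  shows "sat M z g" and "(x, z) \<in> Rl M (truth_set M f)"
proof -
  have "y \<in> W M" using Rl_truth_set_subset[OF VC_model_segerberg[OF M]] xy by blast
  then have "Rimg M (truth_set M f) x \<inter> truth_set M g \<noteq> {}"
    using xy \<open>sat M y g\<close> by (auto simp: Rimg_def)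
  moreover have "z \<in> Rimg M (truth_set M f \<inter> truth_set M g) x"
    using xz unfolding truth_set_Conj by (simp only: Rimg_def mem_Collect_eq)
  ultimately have "z \<in> Rimg M (truth_set M f) x \<inter> truth_set M g"
    using VC_model_frameD(6)[OF M truth_set_in_Pr truth_set_in_Pr VC_Rl_source[OF M xy]]
      VC_model_segerberg[OF M] by blast
  then show "sat M z g" and "(x, z) \<in> Rl M (truth_set M f)"
    by (auto simp: Rimg_def)
qed

fun holds :: "('w, 'a) smodel \<Rightarrow> (nat \<Rightarrow> 'w) \<Rightarrow> 'a pform \<Rightarrow> bool" where
  "holds M g (Lab i f) = sat M (g i) f"
| "holds M g (Rel i f j) = ((g i, g j) \<in> Rl M (truth_set M f))"

definition realizes :: "('w, 'a) smodel \<Rightarrow> (nat \<Rightarrow> 'w) \<Rightarrow> 'a pform list \<Rightarrow> bool" where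
  "realizes M g b \<longleftrightarrow> range g \<subseteq> W M \<and> (\<forall>p\<in>set b. holds M g p)"

lemma realizes_not_closed:
  assumes "realizes M g b"
  shows "\<not> closed_branch b"
proof
  assume "closed_branch b"
  then obtain i f where "Lab i f \<in> set b \<and> Lab i (Neg f) \<in> set b \<or> Lab i Bot \<in> set b"
    unfolding closed_branch_def by blast
  then have "holds M g (Lab i f) \<and> holds M g (Lab i (Neg f)) \<or> holds M g (Lab i Bot)"
    using assms unfolding realizes_def by blast
  then show False by auto
qed

lemma holds_fun_upd_idx:
  "j \<notin> pidx p \<Longrightarrow> holds M (g(j := y)) p = holds M g p"
  by (cases p) auto

lemma realizes_fun_upd:
  assumes "realizes M g b" "j \<notin> idx b" "y \<in> W M"
  shows "realizes M (g(j := y)) b"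
proof -
  have "\<forall>p\<in>set b. j \<notin> pidx p" using assms(2) by (auto simp: idx_def)
  then show ?thesis
    using assms(1,3) holds_fun_upd_idx[of j _ M g y] by (auto simp: realizes_def)
qed

definition extends_realization ::
    "('w, 'a) smodel \<Rightarrow> (nat \<Rightarrow> 'w) \<Rightarrow> 'a pform list \<Rightarrow> 'a pform list list \<Rightarrow> bool" where
  "extends_realization M g b alts \<longleftrightarrow>
     (\<exists>c\<in>set alts. \<exists>g'. realizes M g' (b @ c) \<and> (\<forall>i\<in>idx b. g' i = g i))"

lemma extends_realizationI:
  assumes "realizes M g b" "\<exists>c\<in>set alts. \<forall>p\<in>set c. holds M g p"
  shows "extends_realization M g b alts"
proof -
  obtain c where "c \<in> set alts" "\<forall>p\<in>set c. holds M g p" using assms(2) by blast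
  with assms(1) show ?thesis
    unfolding extends_realization_def realizes_def by (intro bexI[of _ c] exI[of _ g]) auto
qed

lemma extends_realization_fresh:
  assumes "realizes M g b" "new j b" "y \<in> W M"
    and "\<exists>c\<in>set alts. \<forall>p\<in>set c. holds M (g(j := y)) p"
  shows "extends_realization M g b alts"
proof -
  obtain c where c: "c \<in> set alts" "\<forall>p\<in>set c. holds M (g(j := y)) p"
    using assms(4) by blast
  have j: "j \<notin> idx b" using assms(2) by (simp add: new_def)
  then have "realizes M (g(j := y)) (b @ c)"
    using realizes_fun_upd[OF assms(1) j assms(3)] c(2) by (auto simp: realizes_def)
  moreover have "\<forall>i\<in>idx b. (g(j := y)) i = g i" using j by auto
  ultimately show ?thesis using c(1) unfolding extends_realization_def by blast
qed

lemma ea_extends_realization: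
  assumes g: "realizes M g b" and "Rel i f j \<in> set b" "new k b"
  shows "extends_realization M g b
    [[Lab k (Neg f), Lab k h], [Lab k f, Lab k (Neg h)], [Rel i h j]]"
proof (cases "truth_set M f = truth_set M h")
  case True
  then show ?thesis
    using assms by (intro extends_realizationI) (auto simp: realizes_def simp del: sat.simps)
next
  case False
  then obtain y where "y \<in> W M" "sat M y f \<noteq> sat M y h" by blast
  then show ?thesis by (intro extends_realization_fresh[OF g \<open>new k b\<close>]) auto
qed

lemma segerberg_rule_app_extends_realization:
  assumes M: "segerberg_model M" and "s \<noteq> Vc"
    and rule: "rule_app s b alts" and g: "realizes M g b"
  shows "extends_realization M g b alts"
  using rule
proof cases
  case (box i f h j)
  then have "holds M g (Lab i (Box f h))" "holds M g (Rel i f j)"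
    using g unfolding realizes_def by blast+
  then have "holds M g (Lab j h)" by simp
  then show ?thesis using box(1) by (intro extends_realizationI[OF g]) auto
next
  case (ndia i f h j)
  then have "holds M g (Lab i (Neg (Dia f h)))" "holds M g (Rel i f j)"
    using g unfolding realizes_def by blast+
  then have "holds M g (Lab j (Neg h))" by auto
  then show ?thesis using ndia(1) by (intro extends_realizationI[OF g]) auto
next
  case (nbox i f h j)
  then have "holds M g (Lab i (Neg (Box f h)))" using g unfolding realizes_def by blast
  then obtain y where y: "(g i, y) \<in> Rl M (truth_set M f)" "\<not> sat M y h" by auto
  moreover have "y \<in> W M" "i \<noteq> j"
    using y Rl_truth_set_subset[OF M] nbox by (auto simp: new_def idx_def)
  ultimately show ?thesis
    using nbox by (intro extends_realization_fresh[OF g \<open>new j b\<close>]) auto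
next
  case (dia i f h j)
  then have "holds M g (Lab i (Dia f h))" using g unfolding realizes_def by blast
  then obtain y where y: "(g i, y) \<in> Rl M (truth_set M f)" "sat M y h" by auto
  moreover have "y \<in> W M" "i \<noteq> j"
    using y Rl_truth_set_subset[OF M] dia by (auto simp: new_def idx_def)
  ultimately show ?thesis
    using dia by (intro extends_realization_fresh[OF g \<open>new j b\<close>]) auto
next
  case (ea i f j k h)
  then show ?thesis using ea_extends_realization[OF g] by simp
  \<comment> \<open>for the propositional rules and cut, \<open>g\<close> itself realizes one of the alternatives\<close>
qed (use g \<open>s \<noteq> Vc\<close> in \<open>auto intro!: extends_realizationI simp: realizes_def\<close>)

lemma VC_rule_app_extends_realization:
  assumes VC: "VC_model M" and rule: "rule_app Vc b alts" and g: "realizes M g b"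
  shows "extends_realization M g b alts"
  using rule
proof cases
  case (R1 i f j)
  then show ?thesis
    using g VC_Rl_sat[OF VC] by (intro extends_realizationI) (auto simp: realizes_def)
next
  case (R2 j h i f k)
  then have "holds M g (Rel i f j)" "holds M g (Lab j h)"
    using g unfolding realizes_def by blast+
  then obtain y where y: "(g i, y) \<in> Rl M (truth_set M h)"
    using VC_Rl_exists[OF VC, of "g i" "g j" f h] by auto
  moreover have "y \<in> W M" "i \<noteq> k"
    using y Rl_truth_set_subset[OF VC_model_segerberg[OF VC]] R2 by (auto simp: new_def idx_def)
  ultimately show ?thesis
    using R2 by (intro extends_realization_fresh[OF g \<open>new k b\<close>]) auto
next
  case (R3 i f j)
  then have "holds M g (Rel i Top j)" "holds M g (Lab i f)"
    using g unfolding realizes_def by blast+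
  then have "sat M (g j) f" using VC_Rl_Top_eq[OF VC, of "g i" "g j"] by auto
  then show ?thesis using R3 by (intro extends_realizationI[OF g]) auto
next
  case (R4 i)
  have "g i \<in> W M" using g unfolding realizes_def by blast
  then have "holds M g (Rel i Top i)" using VC_Rl_Top_refl[OF VC] by simp
  then show ?thesis using R4 by (intro extends_realizationI[OF g]) auto
next
  case (R5 j h i f)
  then have "holds M g (Rel i f j)" "holds M g (Lab j h)"
    using g unfolding realizes_def by blast+
  then have "holds M g (Rel i (Conj f h) j)"
    using VC_Rl_Conj[OF VC, of "g i" "g j" f h] by simp
  then show ?thesis using R5 by (intro extends_realizationI[OF g]) auto
next
  case (R6 j h i f k)
  then have "holds M g (Rel i f j)" "holds M g (Lab j h)" "holds M g (Rel i (Conj f h) k)"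
    using g unfolding realizes_def by blast+
  then have "holds M g (Lab k h)" "holds M g (Rel i f k)"
    using VC_Rl_Conj_imp[OF VC, of "g i" "g j" f h "g k"] by simp_all
  then show ?thesis using R6 by (intro extends_realizationI[OF g]) auto
  \<comment> \<open>the rules shared with \<open>Ck\<close> are sound in every Segerberg model\<close>
qed (use VC_model_segerberg[OF VC] g in
      \<open>auto intro: segerberg_rule_app_extends_realization[of M Ck] rule_app.intros\<close>)

lemma rule_app_extends_realization:
  assumes "segerberg_model M" "s = Vc \<Longrightarrow> VC_model M" "rule_app s b alts" "realizes M g b"
  shows "extends_realization M g b alts"
  using assms segerberg_rule_app_extends_realization VC_rule_app_extends_realization
  by (cases "s = Vc") auto

text \<open>All assumptions carry index 1, and \<open>new\<close> only avoids the indices already on the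
branch; index 1 is therefore protected once the branch is nonempty, which it is before any rule
applies.\<close>

definition realized_at :: "('w, 'a) smodel \<Rightarrow> 'w \<Rightarrow> 'a pform list \<Rightarrow> bool" where
  "realized_at M x b \<longleftrightarrow> (\<exists>g. realizes M g b \<and> g 1 = x \<and> (b \<noteq> [] \<longrightarrow> 1 \<in> idx b))"

lemma realized_at_Nil: "x \<in> W M \<Longrightarrow> realized_at M x []"
  by (auto simp: realized_at_def realizes_def intro: exI[of _ "\<lambda>_. x"])

lemma realized_at_snoc:
  "realized_at M x b \<Longrightarrow> sat M x f \<Longrightarrow> realized_at M x (b @ [Lab 1 f])"
  by (auto simp: realized_at_def realizes_def idx_def)

lemma rule_app_branch_nonempty: "rule_app s b alts \<Longrightarrow> b \<noteq> []"
  by (induction rule: rule_app.induct) (auto simp: idx_def)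

lemma rule_app_realized_at:
  assumes "segerberg_model M" "s = Vc \<Longrightarrow> VC_model M" "rule_app s b alts"
    and "realized_at M x b"
  shows "\<exists>c\<in>set alts. realized_at M x (b @ c)"
proof -
  obtain g where g: "realizes M g b" "g 1 = x" "1 \<in> idx b"
    using assms(4) rule_app_branch_nonempty[OF assms(3)] by (auto simp: realized_at_def)
  then obtain c g' where "c \<in> set alts" "realizes M g' (b @ c)" "\<forall>i\<in>idx b. g' i = g i"
    using rule_app_extends_realization[OF assms(1-3) g(1)]
    unfolding extends_realization_def by blast
  with g show ?thesis by (auto simp: realized_at_def idx_def)
qed

lemma tableau_realized_at:
  assumes "tableau s ((\<lambda>\<theta>. Lab 1 \<theta>) ` \<Gamma>) T" and M: "segerberg_model M"
    and VC: "s = Vc \<Longrightarrow> VC_model M" and x: "x \<in> W M" "\<forall>f\<in>\<Gamma>. sat M x f"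
  shows "\<exists>b\<in>set T. realized_at M x b"
  using assms(1)
proof induction
  case empty
  show ?case using realized_at_Nil[OF x(1)] by simp
next
  case (assm bs1 b bs2 p)
  show ?case
  proof (cases "realized_at M x b")
    case True
    obtain \<theta> where "p = Lab 1 \<theta>" "\<theta> \<in> \<Gamma>" using assm.hyps(2) by blast
    then have "realized_at M x (b @ [p])" using realized_at_snoc[OF True] x(2) by blast
    then show ?thesis by auto
  qed (use assm.IH in auto)
next
  case (rule bs1 b bs2 alts)
  show ?case
  proof (cases "realized_at M x b")
    case True
    then obtain c where "c \<in> set alts" "realized_at M x (b @ c)"
      using rule_app_realized_at[OF M VC rule.hyps(2)] by blast
    then show ?thesis by (intro bexI[of _ "b @ c"]) auto
  qed (use rule.IH in auto)
qed

lemma tableau_not_closed: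
  assumes "tableau s ((\<lambda>\<theta>. Lab 1 \<theta>) ` \<Gamma>) T" "segerberg_model M" "s = Vc \<Longrightarrow> VC_model M"
    and "satisfiable_in M \<Gamma>"
  shows "\<not> closed_tableau T"
  using tableau_realized_at[OF assms(1-3)] assms(4) realizes_not_closed
  by (fastforce simp: satisfiable_in_def realized_at_def closed_tableau_def)

theorem mainTheorem8:
  fixes \<theta>s :: "'a form list"
  shows
   "((\<exists>M :: ('w, 'a) smodel. segerberg_model M \<and> satisfiable_in M (set \<theta>s)) \<longrightarrow>
       (\<forall>s\<in>{Ck, CK}. \<forall>T. tableau s ((\<lambda>\<theta>. Lab 1 \<theta>) ` set \<theta>s) T \<longrightarrow> \<not> closed_tableau T))
    \<and>
    ((\<exists>M :: ('w, 'a) smodel. VC_model M \<and> satisfiable_in M (set \<theta>s)) \<longrightarrow>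
       (\<forall>T. tableau Vc ((\<lambda>\<theta>. Lab 1 \<theta>) ` set \<theta>s) T \<longrightarrow> \<not> closed_tableau T))"
  using tableau_not_closed VC_model_segerberg by blast

end
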